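(* Let $b$ be a positive integer, $n$ a positive integer coprime with $b$, and $k\in\mathbb N$. Then the Frobenius homomorphism $F_b:\mathbb Z[1/b][q]/(\Phi_n(q)^k)\to\mathbb Z[1/b][q]/(\Phi_n(q)^k)$ defined by $F_b(q)=q^b$ is a (well-defined) isomorphism of algebras.
   Context: $\Phi_n(q)$ denotes the $n$th cyclotomic polynomial. *)

theory Defs
  imports Complex_Main "HOL-Computational_Algebra.Polynomial"
begin

definition prim_roots :: "nat \<Rightarrow> complex set" where
  "prim_roots n = {z. z ^ n = 1 \<and> (\<forall>m\<in>{1..<n}. z ^ m \<noteq> 1)}"

definition cyclotomic_complex :: "nat \<Rightarrow> complex poly" where
  "cyclotomic_complex n = (\<Prod>z\<in>prim_roots n. [:- z, 1:])"

text \<open>The n-th cyclotomic polynomial Phi_n(q) as a polynomial with rational coefficients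
  (its coefficients are in fact integers).\<close>
definition cyclotomic :: "nat \<Rightarrow> rat poly" where
  "cyclotomic n = (THE p. map_poly of_rat p = cyclotomic_complex n)"

definition Zinv :: "nat \<Rightarrow> rat set" where
  "Zinv b = {r. \<exists>(a::int) (m::nat). r = of_int a / of_nat b ^ m}"

definition Zinv_poly :: "nat \<Rightarrow> rat poly set" where
  "Zinv_poly b = {p. \<forall>i. coeff p i \<in> Zinv b}"

text \<open>Congruence modulo the ideal (Phi_n(q)^k) of Z[1/b][q]; the quotient ring
  Z[1/b][q]/(Phi_n(q)^k) is Zinv_poly b modulo this relation.\<close>
definition cong_cyc :: "nat \<Rightarrow> nat \<Rightarrow> nat \<Rightarrow> rat poly \<Rightarrow> rat poly \<Rightarrow> bool" where
  "cong_cyc b n k p p' \<longleftrightarrow> (\<exists>h\<in>Zinv_poly b. p - p' = cyclotomic n ^ k * h)"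

definition frob :: "nat \<Rightarrow> rat poly \<Rightarrow> rat poly" where
  "frob b p = pcompose p (monom 1 b)"

end

theory Submission
  imports Defs
begin

text \<open>
  The proof:
  \<^item> Generalities on subrings, polynomials over a subring, and congruences modulo an element;
    a monic divisor of a polynomial over a subring leaves a cofactor over that subring.
  \<^item> \<open>\<Phi>\<^sub>n\<close> is monic with integer coefficients: over \<open>\<complex>\<close>, \<open>X\<^sup>n - 1 = \<Prod>\<^bsub>d | n\<^esub> \<Phi>\<^sub>d\<close>, so by
    strong induction \<open>\<Phi>\<^sub>n\<close> is \<open>X\<^sup>n - 1\<close> divided by a monic integer polynomial.
  \<^item> Since \<open>\<zeta> \<mapsto> \<zeta>\<^sup>b\<close> permutes the primitive \<open>n\<close>-th roots of unity and the multiplicity of a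
    nonzero root \<open>\<zeta>\<close> of \<open>P(X\<^sup>b)\<close> is that of \<open>\<zeta>\<^sup>b\<close> as a root of \<open>P\<close>, we get
    \<open>\<Phi>\<^sub>n\<^sup>k | F\<^sub>b(P) \<longleftrightarrow> \<Phi>\<^sub>n\<^sup>k | P\<close>: \<open>F\<^sub>b\<close> is well defined and injective modulo \<open>\<Phi>\<^sub>n\<^sup>k\<close>.
  \<^item> Surjectivity: the image of \<open>F\<^sub>b\<close> modulo \<open>\<Phi>\<^sub>n\<^sup>k\<close> is a subring containing \<open>\<int>[1/b]\<close>.
    Newton's iteration for a \<open>b\<close>-th root of \<open>F\<^sub>b(z)\<close>, \<open>z = q\<^sup>n\<close>, which needs \<open>1/b\<close>, shows that
    it contains \<open>z\<close>; writing \<open>bc = 1 + nt\<close> and inverting \<open>z\<close> modulo \<open>\<Phi>\<^sub>n\<^sup>k\<close> it contains \<open>q\<close>.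
\<close>

definition cong_mod :: "'a::comm_ring_1 set \<Rightarrow> 'a \<Rightarrow> 'a \<Rightarrow> 'a \<Rightarrow> bool" where
  "cong_mod R e x y \<longleftrightarrow> (\<exists>h\<in>R. x - y = e * h)"

text \<open>The same
  closure lemmas serve for \<open>\<int>\<close>, \<open>\<int>[1/b]\<close>, polynomial rings over them, and the image of \<open>F\<^sub>b\<close>.\<close>

locale subring =
  fixes S :: "'a::comm_ring_1 set"
  assumes zero_mem [simp]: "0 \<in> S" and one_mem [simp]: "1 \<in> S"
    and add_mem: "x \<in> S \<Longrightarrow> y \<in> S \<Longrightarrow> x + y \<in> S"
    and mult_mem: "x \<in> S \<Longrightarrow> y \<in> S \<Longrightarrow> x * y \<in> S"
    and uminus_mem: "x \<in> S \<Longrightarrow> - x \<in> S"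
begin

lemma diff_mem: "x \<in> S \<Longrightarrow> y \<in> S \<Longrightarrow> x - y \<in> S"
  using add_mem[of x "- y"] uminus_mem[of y] by simp

lemma power_mem: "x \<in> S \<Longrightarrow> x ^ m \<in> S"
  by (induction m) (simp_all add: mult_mem)

lemma sum_mem: "(\<And>i. i \<in> A \<Longrightarrow> f i \<in> S) \<Longrightarrow> sum f A \<in> S"
  by (induction A rule: infinite_finite_induct) (simp_all add: add_mem)

lemma prod_mem: "(\<And>i. i \<in> A \<Longrightarrow> f i \<in> S) \<Longrightarrow> prod f A \<in> S"
  by (induction A rule: infinite_finite_induct) (simp_all add: mult_mem)

lemma cong_modI: "h \<in> S \<Longrightarrow> x - y = e * h \<Longrightarrow> cong_mod S e x y"
  unfolding cong_mod_def by blast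

lemma cong_mod_refl: "cong_mod S e x x"
  by (rule cong_modI[of 0]) simp_all

lemma cong_mod_sym: "cong_mod S e x y \<Longrightarrow> cong_mod S e y x"
proof -
  assume "cong_mod S e x y"
  then obtain h where "h \<in> S" "x - y = e * h" unfolding cong_mod_def by blast
  then show ?thesis by (intro cong_modI[of "- h"]) (simp_all add: uminus_mem algebra_simps)
qed

lemma cong_mod_trans: "cong_mod S e x y \<Longrightarrow> cong_mod S e y z \<Longrightarrow> cong_mod S e x z"
proof -
  assume "cong_mod S e x y" "cong_mod S e y z"
  then obtain h h' where "h \<in> S" "x - y = e * h" "h' \<in> S" "y - z = e * h'"
    unfolding cong_mod_def by blast
  then show ?thesis by (intro cong_modI[of "h + h'"]) (simp_all add: add_mem algebra_simps)
qed

lemma cong_mod_add: "cong_mod S e x x' \<Longrightarrow> cong_mod S e y y' \<Longrightarrow> cong_mod S e (x + y) (x' + y')"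
proof -
  assume "cong_mod S e x x'" "cong_mod S e y y'"
  then obtain h h' where "h \<in> S" "x - x' = e * h" "h' \<in> S" "y - y' = e * h'"
    unfolding cong_mod_def by blast
  then show ?thesis by (intro cong_modI[of "h + h'"]) (simp_all add: add_mem algebra_simps)
qed

lemma cong_mod_uminus: "cong_mod S e x y \<Longrightarrow> cong_mod S e (- x) (- y)"
proof -
  assume "cong_mod S e x y"
  then obtain h where "h \<in> S" "x - y = e * h" unfolding cong_mod_def by blast
  then show ?thesis by (intro cong_modI[of "- h"]) (simp_all add: uminus_mem algebra_simps)
qed

lemma cong_mod_mult:
  assumes "x \<in> S" "y' \<in> S" "cong_mod S e x x'" "cong_mod S e y y'"
  shows "cong_mod S e (x * y) (x' * y')"
proof -
  obtain h h' where h: "h \<in> S" "x - x' = e * h" and h': "h' \<in> S" "y - y' = e * h'"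
    using assms(3,4) unfolding cong_mod_def by blast
  have "x * y - x' * y' = x * (y - y') + (x - x') * y'" by (simp add: algebra_simps)
  also have "\<dots> = e * (x * h' + h * y')" by (simp add: h(2) h'(2) algebra_simps)
  finally show ?thesis
    by (rule cong_modI[rotated]) (intro add_mem mult_mem assms h h')
qed

lemma cong_mod_power:
  assumes "x \<in> S" "x' \<in> S" "cong_mod S e x x'"
  shows "cong_mod S e (x ^ m) (x' ^ m)"
  by (induction m) (simp_all add: cong_mod_refl cong_mod_mult assms power_mem)

lemma cong_mod_sum:
  "(\<And>i. i \<in> A \<Longrightarrow> cong_mod S e (f i) (g i)) \<Longrightarrow> cong_mod S e (sum f A) (sum g A)"
  by (induction A rule: infinite_finite_induct) (simp_all add: cong_mod_refl cong_mod_add)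

lemma cong_mod_weaken: "f \<in> S \<Longrightarrow> cong_mod S (e * f) x y \<Longrightarrow> cong_mod S e x y"
  unfolding cong_mod_def using mult_mem by (auto simp: mult.assoc)

end

definition polys_over :: "'a::zero set \<Rightarrow> 'a poly set" where
  "polys_over S = {p. \<forall>i. coeff p i \<in> S}"

lemma pCons_in_polys_over: "pCons a p \<in> polys_over S \<longleftrightarrow> a \<in> S \<and> p \<in> polys_over S"
  unfolding polys_over_def by (auto simp: coeff_pCons split: nat.split)

context subring
begin

lemma polys_over_subring: "subring (polys_over S)"
proof unfold_locales
  fix p q assume "p \<in> polys_over S" "q \<in> polys_over S"
  then show "p + q \<in> polys_over S" "p * q \<in> polys_over S"
    by (auto simp: polys_over_def coeff_mult intro!: add_mem sum_mem mult_mem)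
next
  fix p assume "p \<in> polys_over S"
  then show "- p \<in> polys_over S" by (auto simp: polys_over_def intro: uminus_mem)
qed (auto simp: polys_over_def coeff_1)

lemma const_in_polys_over: "c \<in> S \<Longrightarrow> [:c:] \<in> polys_over S"
  by (simp add: pCons_in_polys_over) (simp add: polys_over_def)

lemma monom_in_polys_over: "c \<in> S \<Longrightarrow> monom c m \<in> polys_over S"
  by (simp add: polys_over_def)

lemma pcompose_in_polys_over:
  assumes "p \<in> polys_over S" "q \<in> polys_over S"
  shows "pcompose p q \<in> polys_over S"
  using assms(1)
proof (induction p)
  case 0
  show ?case by (simp add: subring.zero_mem[OF polys_over_subring])
next
  case (pCons a p)
  interpret P: subring "polys_over S" by (rule polys_over_subring)
  have "a \<in> S" "p \<in> polys_over S" using pCons.prems by (simp_all add: pCons_in_polys_over)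
  then show ?case
    unfolding pcompose_pCons using pCons.IH assms(2)
    by (intro P.add_mem P.mult_mem const_in_polys_over) simp_all
qed

text \<open>We peel off the
  leading term of \<open>h\<close>, whose coefficient is the leading coefficient of \<open>g * h\<close>.\<close>

lemma monic_cofactor_in_polys_over:
  assumes g: "lead_coeff g = 1" "g \<in> polys_over S" and gh: "g * h \<in> polys_over S"
  shows "h \<in> polys_over S"
  using gh
proof (induction h rule: measure_induct_rule[where f = degree])
  case (less h)
  interpret P: subring "polys_over S" by (rule polys_over_subring)
  show ?case
  proof (cases "h = 0")
    case False
    define t where "t = monom (lead_coeff h) (degree h)"
    have "lead_coeff h = coeff (g * h) (degree g + degree h)"
      using g(1) by (simp add: coeff_mult_degree_sum)
    then have t: "t \<in> polys_over S"
      using less.prems by (simp add: t_def polys_over_def monom_in_polys_over)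
    have "g * (h - t) = g * h - g * t" by (simp add: algebra_simps)
    then have g_rest: "g * (h - t) \<in> polys_over S"
      using less.prems t g(2) by (simp add: P.diff_mem P.mult_mem)
    have "h - t \<in> polys_over S"
    proof (cases "h - t = 0")
      case False
      have "degree (h - t) \<le> degree h"
        unfolding t_def by (rule degree_diff_le) (auto simp: degree_monom_le)
      moreover have "coeff (h - t) (degree h) = 0" by (simp add: t_def)
      ultimately have "degree (h - t) < degree h"
        using False by (metis le_neq_implies_less leading_coeff_0_iff)
      then show ?thesis using less.IH g_rest by blast
    qed simp
    then show ?thesis using P.add_mem[OF _ t] by fastforce
  qed simp
qed

end

lemma Zinv_of_int: "of_int a \<in> Zinv b"
  unfolding Zinv_def by (rule CollectI, rule exI[of _ a], rule exI[of _ 0]) simp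

lemma Ints_subset_Zinv: "\<int> \<subseteq> Zinv b"
  by (auto elim: Ints_cases simp: Zinv_of_int)

lemma inverse_in_Zinv: "1 / of_nat b \<in> Zinv b"
  unfolding Zinv_def by (rule CollectI, rule exI[of _ 1], rule exI[of _ 1]) simp

lemma Zinv_subring:
  assumes "b > 0"
  shows "subring (Zinv b)"
proof unfold_locales
  show "0 \<in> Zinv b" "1 \<in> Zinv b" using Zinv_of_int[of 0] Zinv_of_int[of 1] by simp_all
next
  fix x y assume "x \<in> Zinv b" "y \<in> Zinv b"
  then obtain a m a' m' where x: "x = of_int a / of_nat b ^ m" and y: "y = of_int a' / of_nat b ^ m'"
    unfolding Zinv_def by auto
  have "x + y = of_int (a * int b ^ m' + a' * int b ^ m) / of_nat b ^ (m + m')"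
    using assms by (simp add: x y field_simps power_add)
  moreover have "x * y = of_int (a * a') / of_nat b ^ (m + m')"
    by (simp add: x y power_add)
  ultimately show "x + y \<in> Zinv b" "x * y \<in> Zinv b" unfolding Zinv_def by blast+
next
  fix x assume "x \<in> Zinv b"
  then obtain a m where "x = of_int a / of_nat b ^ m" unfolding Zinv_def by auto
  then have "- x = of_int (- a) / of_nat b ^ m" by simp
  then show "- x \<in> Zinv b" unfolding Zinv_def by blast
qed

lemma Zinv_poly_eq: "Zinv_poly b = polys_over (Zinv b)"
  by (simp add: Zinv_poly_def polys_over_def)

lemma Zinv_poly_subring: "b > 0 \<Longrightarrow> subring (Zinv_poly b)"
  unfolding Zinv_poly_eq by (rule subring.polys_over_subring[OF Zinv_subring])

lemma cong_cyc_eq: "cong_cyc b n k = cong_mod (Zinv_poly b) (cyclotomic n ^ k)"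
  by (intro ext) (simp add: cong_cyc_def cong_mod_def)

text \<open>The embedding is an injective ring
  homomorphism that commutes with composition and reflects divisibility (divisibility over a
  field is decided by the remainder, which is computed over \<open>\<rat>\<close>).\<close>

abbreviation to_complex :: "rat poly \<Rightarrow> complex poly" where
  "to_complex \<equiv> map_poly of_rat"

lemma to_complex_add: "to_complex (p + q) = to_complex p + to_complex q"
  by (rule poly_eqI) (simp add: coeff_map_poly of_rat_add)

lemma to_complex_diff: "to_complex (p - q) = to_complex p - to_complex q"
  by (rule poly_eqI) (simp add: coeff_map_poly of_rat_diff)

lemma to_complex_smult: "to_complex (smult a p) = smult (of_rat a) (to_complex p)"
  by (rule poly_eqI) (simp add: coeff_map_poly of_rat_mult)

lemma to_complex_mult: "to_complex (p * q) = to_complex p * to_complex q"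
  by (induction p) (simp_all add: to_complex_add to_complex_smult map_poly_pCons)

lemma to_complex_power: "to_complex (p ^ m) = to_complex p ^ m"
  by (induction m) (simp_all add: to_complex_mult)

lemma to_complex_prod: "to_complex (prod f A) = (\<Prod>x\<in>A. to_complex (f x))"
  by (induction A rule: infinite_finite_induct) (simp_all add: to_complex_mult)

lemma to_complex_pcompose: "to_complex (pcompose p q) = pcompose (to_complex p) (to_complex q)"
  by (induction p) (simp_all add: pcompose_pCons to_complex_add to_complex_mult map_poly_pCons)

lemma to_complex_xn_minus_1: "to_complex (monom 1 n - 1) = monom 1 n - 1"
  by (simp add: to_complex_diff map_poly_monom)

lemma lead_coeff_to_complex: "lead_coeff (to_complex p) = of_rat (lead_coeff p)"
  by (simp add: degree_map_poly coeff_map_poly)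

lemma to_complex_inj: "to_complex p = to_complex q \<Longrightarrow> p = q"
  by (rule poly_eqI) (metis coeff_map_poly of_rat_0 of_rat_eq_iff)

lemma to_complex_dvd_iff: "to_complex p dvd to_complex q \<longleftrightarrow> p dvd q"
proof
  assume dvd: "to_complex p dvd to_complex q"
  show "p dvd q"
  proof (cases "p = 0")
    case True
    then show ?thesis using dvd to_complex_inj[of q 0] by simp
  next
    case False
    have "to_complex q = to_complex p * to_complex (q div p) + to_complex (q mod p)"
      by (metis div_mult_mod_eq mult.commute to_complex_add to_complex_mult)
    then have "to_complex p dvd to_complex (q mod p)"
      using dvd by (metis dvd_add_right_iff dvd_triv_left)
    moreover have "q mod p = 0 \<or> degree (q mod p) < degree p"
      using False degree_mod_less by blast
    ultimately have "q mod p = 0"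
      using dvd_imp_degree_le[of "to_complex p" "to_complex (q mod p)"] to_complex_inj[of "q mod p" 0]
      by (force simp: degree_map_poly)
    then show ?thesis by (simp add: mod_eq_0_iff_dvd)
  qed
qed (auto simp: to_complex_mult)

lemma prim_root_pow_eq_1_iff:
  assumes "d > 0" "z \<in> prim_roots d"
  shows "z ^ j = 1 \<longleftrightarrow> d dvd j"
proof
  have zd: "z ^ d = 1" using assms(2) by (simp add: prim_roots_def)
  assume j: "z ^ j = 1"
  have "z ^ j = (z ^ d) ^ (j div d) * z ^ (j mod d)"
    by (simp only: power_mult [symmetric] power_add [symmetric] mult_div_mod_eq)
  then have "z ^ (j mod d) = 1" using j zd by simp
  moreover have "j mod d < d" using assms(1) by simp
  ultimately have "j mod d \<notin> {1..<d}" using assms(2) by (auto simp: prim_roots_def)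
  then show "d dvd j" using \<open>j mod d < d\<close> by (auto simp: dvd_eq_mod_eq_0)
next
  assume "d dvd j"
  then show "z ^ j = 1" using assms(2) by (auto simp: prim_roots_def power_mult)
qed

lemma prim_roots_nonzero: "d > 0 \<Longrightarrow> z \<in> prim_roots d \<Longrightarrow> z \<noteq> 0"
  by (auto simp: prim_roots_def power_0_left)

lemma prim_roots_finite: "d > 0 \<Longrightarrow> finite (prim_roots d)"
  by (rule finite_subset[OF _ finite_roots_unity[of d]]) (auto simp: prim_roots_def)

lemma prim_roots_disjoint:
  assumes "d > 0" "d' > 0" "z \<in> prim_roots d" "z \<in> prim_roots d'"
  shows "d = d'"
proof (rule dvd_antisym)
  show "d dvd d'" using prim_root_pow_eq_1_iff[OF assms(1,3)] assms(4) by (simp add: prim_roots_def)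
  show "d' dvd d" using prim_root_pow_eq_1_iff[OF assms(2,4)] assms(3) by (simp add: prim_roots_def)
qed

lemma prim_root_pow_coprime:
  assumes "d > 0" "z \<in> prim_roots d" "coprime j d"
  shows "z ^ j \<in> prim_roots d"
proof -
  have "(z ^ j) ^ m = 1 \<longleftrightarrow> d dvd m" for m
    using prim_root_pow_eq_1_iff[OF assms(1,2), of "j * m"] assms(3)
    by (simp add: power_mult coprime_dvd_mult_right_iff coprime_commute)
  then show ?thesis unfolding prim_roots_def by (auto dest: dvd_imp_le)
qed

text \<open>An inverse of \<open>b\<close> modulo \<open>n\<close>, in the form needed for natural numbers.\<close>

lemma bezout_coprime:
  assumes "b > 0" "coprime n b"
  obtains c t :: nat where "b * c = 1 + n * t"
proof -
  obtain c t where "b * c = n * t + gcd b n" using bezout_nat[of b n] assms(1) by auto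
  then show ?thesis using that assms(2) by (simp add: coprime_iff_gcd_eq_1 gcd.commute)
qed

lemma prim_root_pow_surj:
  assumes "b > 0" "n > 0" "coprime n b" "w \<in> prim_roots n"
  shows "\<exists>z\<in>prim_roots n. z ^ b = w"
proof -
  obtain c t where bc: "b * c = 1 + n * t" using bezout_coprime[OF assms(1,3)] by blast
  have "coprime c n"
  proof (rule coprimeI)
    fix d assume "d dvd c" "d dvd n"
    then have "d dvd b * c - n * t" by (intro dvd_diff_nat) auto
    then show "is_unit d" using bc by simp
  qed
  then have "w ^ c \<in> prim_roots n" by (rule prim_root_pow_coprime[OF assms(2,4)])
  moreover have "(w ^ c) ^ b = w * (w ^ n) ^ t"
    by (simp only: power_mult [symmetric] mult.commute[of c b] bc power_add power_one_right)
  then have "(w ^ c) ^ b = w" using assms(4) by (simp add: prim_roots_def)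
  ultimately show ?thesis by blast
qed

lemma roots_unity_decomp:
  assumes "n > 0"
  shows "{z::complex. z ^ n = 1} = (\<Union>d\<in>{d. d dvd n}. prim_roots d)"
proof (intro equalityI subsetI)
  fix z :: complex assume "z \<in> {z. z ^ n = 1}"
  then have zn: "z ^ n = 1" by simp
  define d where "d = (LEAST d. 0 < d \<and> z ^ d = 1)"
  have d: "0 < d \<and> z ^ d = 1" unfolding d_def by (rule LeastI[of _ n]) (use assms zn in auto)
  have "z ^ m \<noteq> 1" if "m \<in> {1..<d}" for m
    using not_less_Least[of m "\<lambda>d. 0 < d \<and> z ^ d = 1"] that by (auto simp: d_def)
  then have "z \<in> prim_roots d" using d by (simp add: prim_roots_def)
  moreover have "d dvd n" using prim_root_pow_eq_1_iff[OF _ \<open>z \<in> prim_roots d\<close>] d zn by blast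
  ultimately show "z \<in> (\<Union>d\<in>{d. d dvd n}. prim_roots d)" by blast
next
  fix z assume "z \<in> (\<Union>d\<in>{d. d dvd n}. prim_roots d)"
  then obtain d where "d dvd n" "z \<in> prim_roots d" by blast
  moreover have "d > 0" using \<open>d dvd n\<close> assms by (auto intro!: Nat.gr0I)
  ultimately show "z \<in> {z. z ^ n = 1}" using prim_root_pow_eq_1_iff by blast
qed

lemma prod_linear_powers_dvd:
  fixes P :: "'a::idom poly"
  assumes "finite Z" "\<And>z. z \<in> Z \<Longrightarrow> [:-z, 1:] ^ k dvd P"
  shows "(\<Prod>z\<in>Z. [:-z, 1:] ^ k) dvd P"
  using assms
proof (induction Z arbitrary: P rule: finite_induct)
  case (insert z Z)
  show ?case
  proof (cases "P = 0")
    case False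
    obtain Q where Q: "P = [:-z, 1:] ^ k * Q" using insert.prems by blast
    have "[:-w, 1:] ^ k dvd Q" if w: "w \<in> Z" for w
    proof -
      have "k \<le> order w P" using insert.prems w False order_divides by blast
      also have "order w P = order w ([:-z, 1:] ^ k) + order w Q"
        using Q False by (simp add: order_mult)
      also have "order w ([:-z, 1:] ^ k) = 0"
        using insert.hyps w by (intro order_0I) auto
      finally show ?thesis using order_divides by auto
    qed
    then have "(\<Prod>z\<in>Z. [:-z, 1:] ^ k) dvd Q" by (rule insert.IH)
    then show ?thesis using insert.hyps by (simp add: Q mult_dvd_mono)
  qed simp
qed simp

lemma monic_dvd_eq:
  fixes A B :: "'a::idom poly"
  assumes "lead_coeff A = 1" "lead_coeff B = 1" "degree A = degree B" "A dvd B"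
  shows "A = B"
proof -
  obtain C where C: "B = A * C" using assms(4) by blast
  have "A \<noteq> 0" "C \<noteq> 0" using assms(1,2) C by auto
  then have "degree C = 0" using C assms(3) by (simp add: degree_mult_eq)
  moreover have "lead_coeff C = 1" using C assms(1,2) by (simp add: lead_coeff_mult)
  ultimately have "C = 1" by (metis degree_0_id one_pCons)
  then show ?thesis using C by simp
qed

lemma xn_minus_1_monic:
  assumes "n > 0"
  shows "degree (monom 1 n - 1 :: 'a::comm_ring_1 poly) = n"
    and "lead_coeff (monom 1 n - 1 :: 'a poly) = 1"
proof -
  have "degree (monom 1 n - 1 :: 'a poly) \<le> n"
    by (rule degree_diff_le) (auto simp: degree_monom_le)
  moreover have "coeff (monom 1 n - 1 :: 'a poly) n = 1" using assms by simp
  ultimately show d: "degree (monom 1 n - 1 :: 'a poly) = n"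
    by (metis le_antisym le_degree one_neq_zero)
  then show "lead_coeff (monom 1 n - 1 :: 'a poly) = 1" using assms by simp
qed

lemma xn_minus_1_eq_prod_roots:
  assumes "n > 0"
  shows "(monom 1 n - 1 :: complex poly) = (\<Prod>z\<in>{z. z ^ n = 1}. [:-z, 1:])"
proof -
  let ?R = "{z::complex. z ^ n = 1}"
  have fin: "finite ?R" using finite_roots_unity[of n] assms by simp
  have dvd: "(\<Prod>z\<in>?R. [:-z, 1:] ^ 1) dvd (monom 1 n - 1 :: complex poly)"
    by (rule prod_linear_powers_dvd[OF fin]) (auto simp: poly_eq_0_iff_dvd[symmetric] poly_monom)
  have lead: "lead_coeff (\<Prod>z\<in>?R. [:-z, 1:]) = 1" by (simp add: lead_coeff_prod)
  have "degree (\<Prod>z\<in>?R. [:-z, 1:]) = n"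
    using fin card_roots_unity_eq[OF assms] by (simp add: degree_prod_sum_eq)
  then have "(\<Prod>z\<in>?R. [:-z, 1:]) = (monom 1 n - 1 :: complex poly)"
    using dvd by (intro monic_dvd_eq[OF lead xn_minus_1_monic(2)[OF assms]])
      (simp_all only: xn_minus_1_monic(1)[OF assms] power_one_right)
  then show ?thesis by simp
qed

lemma cyclotomic_complex_monic: "lead_coeff (cyclotomic_complex n) = 1"
  by (simp add: cyclotomic_complex_def lead_coeff_prod)

lemma xn_minus_1_eq_prod_cyclotomic_complex:
  assumes "n > 0"
  shows "(monom 1 n - 1 :: complex poly) = (\<Prod>d\<in>{d. d dvd n}. cyclotomic_complex d)"
proof -
  have pos: "d > 0" if "d \<in> {d. d dvd n}" for d using that assms by (auto intro!: Nat.gr0I)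
  have "(monom 1 n - 1 :: complex poly) = (\<Prod>z\<in>(\<Union>d\<in>{d. d dvd n}. prim_roots d). [:-z, 1:])"
    using xn_minus_1_eq_prod_roots[OF assms] roots_unity_decomp[OF assms] by simp
  also have "\<dots> = (\<Prod>d\<in>{d. d dvd n}. \<Prod>z\<in>prim_roots d. [:-z, 1:])"
    using assms pos prim_roots_finite prim_roots_disjoint
    by (intro prod.UNION_disjoint) auto
  finally show ?thesis by (simp add: cyclotomic_complex_def)
qed

text \<open>\<open>\<Phi>\<^sub>n\<close> has rational, indeed integer, coefficients: by strong induction, \<open>\<Phi>\<^sub>n\<close> is the
  quotient of \<open>X\<^sup>n - 1\<close> by the monic integer polynomial \<open>\<Prod>\<^bsub>d | n, d < n\<^esub> \<Phi>\<^sub>d\<close>.\<close>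

lemma Ints_subring: "subring (\<int> :: 'a::comm_ring_1 set)"
  by unfold_locales auto

lemma cyclotomic_complex_integral:
  "n > 0 \<Longrightarrow> \<exists>p \<in> polys_over \<int>. to_complex p = cyclotomic_complex n"
proof (induction n rule: less_induct)
  case (less n)
  interpret I: subring "\<int> :: rat set" by (rule Ints_subring)
  interpret IP: subring "polys_over (\<int> :: rat set)" by (rule I.polys_over_subring)
  define D where "D = {d. d dvd n \<and> d < n}"
  have D: "0 < d \<and> d < n" if "d \<in> D" for d
    using less.prems that by (auto simp: D_def intro!: Nat.gr0I)
  obtain P where P: "\<And>d. d \<in> D \<Longrightarrow> P d \<in> polys_over \<int> \<and> to_complex (P d) = cyclotomic_complex d"
    using less.IH D by metis
  define Q where "Q = (\<Prod>d\<in>D. P d)"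
  have Q: "Q \<in> polys_over \<int>" unfolding Q_def using P by (intro IP.prod_mem) blast
  have to_complex_Q: "to_complex Q = (\<Prod>d\<in>D. cyclotomic_complex d)"
    unfolding Q_def to_complex_prod using P by simp
  then have "of_rat (lead_coeff Q) = (1 :: complex)"
    by (simp flip: lead_coeff_to_complex add: lead_coeff_prod cyclotomic_complex_monic)
  then have lead_Q: "lead_coeff Q = 1" by simp
  have "{d. d dvd n} = insert n D" "n \<notin> D" "finite D"
    using less.prems by (auto simp: D_def dest: dvd_imp_le)
  then have xn: "(monom 1 n - 1 :: complex poly) = cyclotomic_complex n * to_complex Q"
    using xn_minus_1_eq_prod_cyclotomic_complex[OF less.prems] by (simp add: to_complex_Q)
  then have "Q dvd monom 1 n - 1"
    by (simp flip: to_complex_dvd_iff add: to_complex_xn_minus_1)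
  then obtain R where R: "monom 1 n - 1 = Q * R" by blast
  have "to_complex Q \<noteq> 0" using lead_Q lead_coeff_to_complex[of Q] by auto
  moreover have "to_complex Q * to_complex R = to_complex Q * cyclotomic_complex n"
    using xn R by (simp flip: to_complex_mult to_complex_xn_minus_1 add: mult.commute)
  ultimately have "to_complex R = cyclotomic_complex n" by simp
  moreover have "Q * R \<in> polys_over \<int>"
    unfolding R[symmetric] by (intro IP.diff_mem I.monom_in_polys_over) simp_all
  then have "R \<in> polys_over \<int>" by (rule I.monic_cofactor_in_polys_over[OF lead_Q Q])
  ultimately show ?case by blast
qed

lemma cyclotomic:
  assumes "n > 0"
  shows "to_complex (cyclotomic n) = cyclotomic_complex n"
    and "cyclotomic n \<in> polys_over \<int>"
    and "lead_coeff (cyclotomic n) = 1"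
proof -
  obtain p where p: "p \<in> polys_over \<int>" "to_complex p = cyclotomic_complex n"
    using cyclotomic_complex_integral[OF assms] by blast
  have "cyclotomic n = p" unfolding cyclotomic_def
    by (rule the_equality) (use p to_complex_inj in auto)
  then show c: "to_complex (cyclotomic n) = cyclotomic_complex n" "cyclotomic n \<in> polys_over \<int>"
    using p by auto
  have "of_rat (lead_coeff (cyclotomic n)) = (1::complex)"
    using c(1) cyclotomic_complex_monic[of n] by (simp flip: lead_coeff_to_complex)
  then show "lead_coeff (cyclotomic n) = 1" by simp
qed

text \<open>Multiplicities under the substitution \<open>X \<mapsto> X\<^sup>b\<close>: a nonzero \<open>z\<close> is a simple root of
  \<open>X\<^sup>b - z\<^sup>b\<close> (its derivative \<open>b z\<^sup>b\<^sup>-\<^sup>1\<close> does not vanish there), so the multiplicity of \<open>z\<close>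
  as a root of \<open>P(X\<^sup>b)\<close> equals the multiplicity of \<open>z\<^sup>b\<close> as a root of \<open>P\<close>.\<close>

lemma pcompose_power: "pcompose (p ^ m) q = pcompose p q ^ m"
  by (induction m) (simp_all add: pcompose_mult pcompose_1)

lemma order_pcompose_monom:
  fixes P :: "'a::field_char_0 poly"
  assumes "P \<noteq> 0" "z \<noteq> 0" "b > 0"
  shows "order z (pcompose P (monom 1 b)) = order (z ^ b) P"
proof -
  define m where "m = order (z ^ b) P"
  obtain R where R: "P = [:-(z ^ b), 1:] ^ m * R" "\<not> [:-(z ^ b), 1:] dvd R"
    using order_decomp[OF assms(1)] unfolding m_def by blast
  have "poly (monom 1 b - [:z ^ b:]) z = 0" by (simp add: poly_monom)
  then obtain T where T: "monom 1 b - [:z ^ b:] = [:-z, 1:] * T" using poly_eq_0_iff_dvd by blast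
  have "poly T z = poly (pderiv (monom 1 b - [:z ^ b:])) z"
    unfolding T pderiv_mult by (simp add: pderiv_pCons)
  also have "\<dots> = of_nat b * z ^ (b - 1)"
    by (simp add: pderiv_diff pderiv_monom pderiv_pCons poly_monom)
  finally have "poly T z = of_nat b * z ^ (b - 1)" .
  then have T_z: "poly T z \<noteq> 0" using assms(2,3) by simp
  define R' where "R' = pcompose R (monom 1 b)"
  have R'_z: "poly R' z \<noteq> 0"
    using R(2) by (simp add: R'_def poly_pcompose poly_monom poly_eq_0_iff_dvd)
  have "pcompose P (monom 1 b) = (pcompose [:-(z ^ b), 1:] (monom 1 b)) ^ m * R'"
    by (simp only: R(1) pcompose_mult pcompose_power R'_def)
  also have "pcompose [:-(z ^ b), 1:] (monom 1 b) = monom 1 b - [:z ^ b:]"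
    by (simp add: pcompose_pCons)
  finally have "pcompose P (monom 1 b) = [:-z, 1:] ^ m * (T ^ m * R')"
    by (simp only: T power_mult_distrib mult.assoc)
  moreover have "poly (T ^ m * R') z \<noteq> 0" using T_z R'_z by simp
  then have "order z ([:-z, 1:] ^ m * (T ^ m * R')) = m"
    by (subst order_mult) (auto simp: order_power_n_n order_0I)
  ultimately show ?thesis by (simp add: m_def)
qed

lemma cyclotomic_complex_power_dvd_iff:
  assumes "n > 0" "P \<noteq> 0"
  shows "cyclotomic_complex n ^ k dvd P \<longleftrightarrow> (\<forall>z\<in>prim_roots n. k \<le> order z P)"
proof
  assume dvd: "cyclotomic_complex n ^ k dvd P"
  show "\<forall>z\<in>prim_roots n. k \<le> order z P"
  proof
    fix z assume "z \<in> prim_roots n"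
    then have "[:-z, 1:] ^ k dvd cyclotomic_complex n ^ k"
      unfolding cyclotomic_complex_def prod_power_distrib
      by (intro dvd_prodI prim_roots_finite assms(1))
    then show "k \<le> order z P" using dvd assms(2) order_divides dvd_trans by metis
  qed
next
  assume "\<forall>z\<in>prim_roots n. k \<le> order z P"
  then have "(\<Prod>z\<in>prim_roots n. [:-z, 1:] ^ k) dvd P"
    by (intro prod_linear_powers_dvd prim_roots_finite assms(1)) (simp add: order_divides)
  then show "cyclotomic_complex n ^ k dvd P"
    by (simp add: cyclotomic_complex_def prod_power_distrib)
qed

text \<open>The key divisibility fact: for \<open>n\<close> coprime to \<open>b\<close>, \<open>\<Phi>\<^sub>n\<^sup>k\<close> divides \<open>P(q\<^sup>b)\<close> iff it
  divides \<open>P(q)\<close>, because \<open>\<zeta> \<mapsto> \<zeta>\<^sup>b\<close> permutes the primitive \<open>n\<close>-th roots of unity.\<close>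

lemma cyclotomic_power_dvd_frob_iff:
  assumes "b > 0" "n > 0" "coprime n b"
  shows "cyclotomic n ^ k dvd frob b P \<longleftrightarrow> cyclotomic n ^ k dvd P"
proof (cases "P = 0")
  case False
  define F where "F = to_complex P"
  have F: "F \<noteq> 0" using False to_complex_inj[of P 0] by (auto simp: F_def)
  have frob: "to_complex (frob b P) = pcompose F (monom 1 b)"
    by (simp add: F_def frob_def to_complex_pcompose map_poly_monom)
  have "pcompose F (monom 1 b) \<noteq> 0"
    using pcompose_eq_0[of F "monom 1 b"] F assms(1) by (auto simp: degree_monom_eq)
  then have "cyclotomic n ^ k dvd frob b P \<longleftrightarrow>
      (\<forall>z\<in>prim_roots n. k \<le> order z (pcompose F (monom 1 b)))"
    by (simp flip: to_complex_dvd_iff cyclotomic_complex_power_dvd_iff[OF assms(2)]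
        add: to_complex_power cyclotomic(1)[OF assms(2)] frob)
  also have "\<dots> \<longleftrightarrow> (\<forall>z\<in>prim_roots n. k \<le> order (z ^ b) F)"
    using F assms(1) prim_roots_nonzero[OF assms(2)] by (simp add: order_pcompose_monom)
  also have "\<dots> \<longleftrightarrow> (\<forall>w\<in>prim_roots n. k \<le> order w F)"
    using prim_root_pow_coprime[OF assms(2), of _ b] prim_root_pow_surj[OF assms] assms(3)
    by (metis coprime_commute)
  also have "\<dots> \<longleftrightarrow> cyclotomic_complex n ^ k dvd F"
    using cyclotomic_complex_power_dvd_iff[OF assms(2) F] by simp
  also have "\<dots> \<longleftrightarrow> cyclotomic n ^ k dvd P"
    by (simp flip: to_complex_dvd_iff add: to_complex_power cyclotomic(1)[OF assms(2)] F_def)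
  finally show ?thesis .
qed (simp add: frob_def)

lemma cyclotomic_dvd_xn_minus_1: "n > 0 \<Longrightarrow> cyclotomic n dvd monom 1 n - 1"
  by (simp flip: to_complex_dvd_iff add: cyclotomic(1) to_complex_xn_minus_1
      xn_minus_1_eq_prod_cyclotomic_complex dvd_prodI)

text \<open>Since \<open>\<Phi>\<^sub>n\<^sup>k\<close> is monic with coefficients in \<open>\<int>[1/b]\<close>, congruence
  modulo \<open>\<Phi>\<^sub>n\<^sup>k\<close> in \<open>\<int>[1/b][q]\<close> is just divisibility in \<open>\<rat>[q]\<close>.\<close>

lemma cyclotomic_in_Zinv_poly: "n > 0 \<Longrightarrow> cyclotomic n \<in> Zinv_poly b"
  using cyclotomic(2)[of n] Ints_subset_Zinv[of b] by (auto simp: Zinv_poly_eq polys_over_def)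

lemma cong_cyc_iff_dvd:
  assumes "b > 0" "n > 0" "p \<in> Zinv_poly b" "p' \<in> Zinv_poly b"
  shows "cong_cyc b n k p p' \<longleftrightarrow> cyclotomic n ^ k dvd p - p'"
proof
  assume "cyclotomic n ^ k dvd p - p'"
  then obtain h where h: "p - p' = cyclotomic n ^ k * h" by blast
  interpret Z: subring "Zinv b" by (rule Zinv_subring[OF assms(1)])
  interpret ZP: subring "Zinv_poly b" by (rule Zinv_poly_subring[OF assms(1)])
  have "h \<in> Zinv_poly b"
    unfolding Zinv_poly_eq
  proof (rule Z.monic_cofactor_in_polys_over)
    show "lead_coeff (cyclotomic n ^ k) = 1" by (simp add: lead_coeff_power cyclotomic(3)[OF assms(2)])
    show "cyclotomic n ^ k \<in> polys_over (Zinv b)"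
      using ZP.power_mem[OF cyclotomic_in_Zinv_poly[OF assms(2)]] by (simp add: Zinv_poly_eq)
    show "cyclotomic n ^ k * h \<in> polys_over (Zinv b)"
      using ZP.diff_mem[OF assms(3,4)] h by (simp add: Zinv_poly_eq)
  qed
  then show "cong_cyc b n k p p'" using h by (auto simp: cong_cyc_def)
qed (auto simp: cong_cyc_def)

lemma frob_in_Zinv_poly:
  assumes "b > 0" "p \<in> Zinv_poly b"
  shows "frob b p \<in> Zinv_poly b"
proof -
  interpret Z: subring "Zinv b" by (rule Zinv_subring[OF assms(1)])
  show ?thesis using assms(2)
    unfolding frob_def Zinv_poly_eq by (intro Z.pcompose_in_polys_over Z.monom_in_polys_over) simp_all
qed

lemma frob_monom: "frob b (monom 1 m) = monom 1 (b * m)"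
proof -
  have "frob b (monom 1 m) = pcompose [:0, 1:] (monom 1 b) ^ m"
    by (simp add: frob_def monom_altdef pcompose_power)
  then show ?thesis by (simp add: pcompose_pCons monom_power)
qed

lemma cong_cyc_frob_iff:
  assumes "b > 0" "n > 0" "coprime n b" "p \<in> Zinv_poly b" "p' \<in> Zinv_poly b"
  shows "cong_cyc b n k (frob b p) (frob b p') \<longleftrightarrow> cong_cyc b n k p p'"
proof -
  have "frob b p - frob b p' = frob b (p - p')" by (simp add: frob_def pcompose_diff)
  then show ?thesis
    using assms frob_in_Zinv_poly
    by (simp add: cong_cyc_iff_dvd cyclotomic_power_dvd_frob_iff)
qed

text \<open>The set of elements of \<open>\<int>[1/b][q]\<close> that are congruent to some \<open>F\<^sub>b(r)\<close>
  is a subring containing the constants; it remains to show that it contains \<open>q\<close>.\<close>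

definition frob_image :: "nat \<Rightarrow> nat \<Rightarrow> nat \<Rightarrow> rat poly set" where
  "frob_image b n k = {y \<in> Zinv_poly b. \<exists>r\<in>Zinv_poly b. cong_cyc b n k (frob b r) y}"

text \<open>Newton's iteration for the \<open>b\<close>-th root, in any commutative ring where \<open>b\<close> has an
  inverse \<open>c\<close>: one step \<open>\<alpha> \<mapsto> \<alpha> + c (z\<^sup>b - \<alpha>\<^sup>b)\<close> multiplies the error \<open>z - \<alpha>\<close> by
  \<open>-c (S - b)\<close>, where \<open>S = (z\<^sup>b - \<alpha>\<^sup>b)/(z - \<alpha>)\<close>.\<close>

lemma newton_step_error:
  fixes z \<alpha> c :: "'a::comm_ring_1"
  assumes "c * of_nat b = 1"
  shows "z - (\<alpha> + c * (z ^ b - \<alpha> ^ b))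
    = - c * ((z - \<alpha>) * ((\<Sum>i<b. \<alpha> ^ (b - Suc i) * z ^ i) - of_nat b))"
proof -
  define D where "D = (\<Sum>i<b. \<alpha> ^ (b - Suc i) * z ^ i)"
  have D: "z ^ b - \<alpha> ^ b = (z - \<alpha>) * D" unfolding D_def by (rule power_diff_sumr2)
  have "- c * ((z - \<alpha>) * (D - of_nat b)) = (z - \<alpha>) * (c * of_nat b) - c * ((z - \<alpha>) * D)"
    by (simp add: algebra_simps)
  also have "\<dots> = z - (\<alpha> + c * (z ^ b - \<alpha> ^ b))" by (simp add: assms D)
  finally show ?thesis by (simp add: D_def)
qed

context
  fixes b n k :: nat
  assumes b: "b > 0" and n: "n > 0" and coprime: "coprime n b"
begin

interpretation Z: subring "Zinv b" by (rule Zinv_subring[OF b])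
interpretation ZP: subring "Zinv_poly b" by (rule Zinv_poly_subring[OF b])

lemma frob_image_subring: "subring (frob_image b n k)"
proof unfold_locales
  fix y y' assume "y \<in> frob_image b n k" "y' \<in> frob_image b n k"
  then obtain r r' where r: "r \<in> Zinv_poly b" "cong_cyc b n k (frob b r) y" "y \<in> Zinv_poly b"
    and r': "r' \<in> Zinv_poly b" "cong_cyc b n k (frob b r') y'" "y' \<in> Zinv_poly b"
    unfolding frob_image_def by blast
  have "cong_cyc b n k (frob b (r + r')) (y + y')"
    using ZP.cong_mod_add r(2) r'(2) by (simp add: frob_def pcompose_add cong_cyc_eq)
  moreover have "cong_cyc b n k (frob b (r * r')) (y * y')"
    using ZP.cong_mod_mult frob_in_Zinv_poly[OF b r(1)] r(2) r'(2,3)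
    by (simp add: frob_def pcompose_mult cong_cyc_eq)
  ultimately show "y + y' \<in> frob_image b n k" "y * y' \<in> frob_image b n k"
    unfolding frob_image_def using r r' by (auto intro: ZP.add_mem ZP.mult_mem)
next
  fix y assume "y \<in> frob_image b n k"
  then obtain r where "r \<in> Zinv_poly b" "cong_cyc b n k (frob b r) y" "y \<in> Zinv_poly b"
    unfolding frob_image_def by blast
  moreover have "frob b (- r) = - frob b r" by (simp add: frob_def pcompose_uminus)
  ultimately show "- y \<in> frob_image b n k"
    unfolding frob_image_def cong_cyc_eq
    by (auto intro!: ZP.uminus_mem bexI[of _ "- r"] ZP.cong_mod_uminus)
next
  have "cong_cyc b n k (frob b 0) 0" "cong_cyc b n k (frob b 1) 1"
    by (simp_all add: frob_def pcompose_1 cong_cyc_eq ZP.cong_mod_refl)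
  then show "0 \<in> frob_image b n k" "1 \<in> frob_image b n k"
    unfolding frob_image_def using ZP.zero_mem ZP.one_mem by blast+
qed

interpretation A: subring "frob_image b n k" by (rule frob_image_subring)

lemma frob_in_image: "r \<in> Zinv_poly b \<Longrightarrow> frob b r \<in> frob_image b n k"
  unfolding frob_image_def cong_cyc_eq using frob_in_Zinv_poly[OF b] ZP.cong_mod_refl by blast

lemma const_in_image: "c \<in> Zinv b \<Longrightarrow> [:c:] \<in> frob_image b n k"
  using frob_in_image[of "[:c:]"] by (simp add: frob_def Zinv_poly_eq Z.const_in_polys_over)

lemma image_cong:
  "y \<in> frob_image b n k \<Longrightarrow> y' \<in> Zinv_poly b \<Longrightarrow> cong_cyc b n k y y' \<Longrightarrow> y' \<in> frob_image b n k"
  unfolding frob_image_def cong_cyc_eq using ZP.cong_mod_trans by blast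

lemma xn_in_Zinv_poly: "monom 1 m \<in> Zinv_poly b"
  unfolding Zinv_poly_eq by (simp add: Z.monom_in_polys_over)

lemma xn_minus_1_cyclotomic_multiple:
  obtains \<psi> where "\<psi> \<in> Zinv_poly b" "monom 1 n - 1 = cyclotomic n * \<psi>"
proof -
  have "cong_cyc b n 1 (monom 1 n) 1"
    using cyclotomic_dvd_xn_minus_1[OF n] xn_in_Zinv_poly
    by (subst cong_cyc_iff_dvd[OF b n]) simp_all
  then show ?thesis using that by (auto simp: cong_cyc_def)
qed

text \<open>Newton's iteration, started at \<open>\<alpha> = 1\<close>, approximates \<open>z = q\<^sup>n\<close> by elements of the image
  to arbitrary \<open>(z - 1)\<close>-adic precision: each step stays in the image since \<open>z\<^sup>b = F\<^sub>b(z)\<close>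
  and \<open>1/b \<in> \<int>[1/b]\<close>, and the factor \<open>S - b\<close> is divisible by \<open>z - 1\<close> because
  \<open>\<alpha> \<equiv> z \<equiv> 1\<close> modulo \<open>z - 1\<close>.\<close>

lemma newton_approximation:
  "\<exists>\<alpha>\<in>frob_image b n k. cong_mod (Zinv_poly b) ((monom 1 n - 1) ^ Suc j) (monom 1 n) \<alpha>"
proof (induction j)
  case 0
  show ?case using A.one_mem by (intro bexI[of _ 1] ZP.cong_modI[of 1]) simp_all
next
  case (Suc j)
  define z :: "rat poly" where "z = monom 1 n"
  define e where "e = z - 1"
  have z: "z \<in> Zinv_poly b" unfolding z_def by (rule xn_in_Zinv_poly)
  obtain \<alpha> u where \<alpha>: "\<alpha> \<in> frob_image b n k" and u: "u \<in> Zinv_poly b"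
    and err: "z - \<alpha> = e ^ Suc j * u"
    using Suc.IH unfolding cong_mod_def z_def e_def by blast
  have \<alpha>_Z: "\<alpha> \<in> Zinv_poly b" using \<alpha> by (simp add: frob_image_def)
  define S where "S = (\<Sum>i<b. \<alpha> ^ (b - Suc i) * z ^ i)"
  have "\<alpha> - 1 = e * (1 - e ^ j * u)" using err by (simp add: e_def algebra_simps)
  moreover have "1 - e ^ j * u \<in> Zinv_poly b"
    unfolding e_def using u z by (intro ZP.diff_mem ZP.mult_mem ZP.power_mem ZP.one_mem)
  ultimately have "cong_mod (Zinv_poly b) e \<alpha> 1" by (rule ZP.cong_modI[rotated])
  moreover have "cong_mod (Zinv_poly b) e z 1" by (rule ZP.cong_modI[of 1]) (simp_all add: e_def)
  ultimately have "cong_mod (Zinv_poly b) e S (\<Sum>i<b. 1 ^ (b - Suc i) * 1 ^ i)"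
    unfolding S_def using \<alpha>_Z z
    by (intro ZP.cong_mod_sum ZP.cong_mod_mult ZP.cong_mod_power ZP.power_mem) simp_all
  then obtain v where v: "v \<in> Zinv_poly b" "S - of_nat b = e * v"
    unfolding cong_mod_def by auto
  define c :: "rat poly" where "c = [:1 / of_nat b:]"
  have c: "c \<in> frob_image b n k" unfolding c_def by (intro const_in_image inverse_in_Zinv)
  have cb: "c * of_nat b = 1" using b by (simp add: c_def of_nat_poly one_pCons)
  define \<alpha>' where "\<alpha>' = \<alpha> + c * (z ^ b - \<alpha> ^ b)"
  have zb: "z ^ b = frob b z" by (simp add: z_def frob_monom monom_power mult.commute)
  have "\<alpha>' \<in> frob_image b n k"
    unfolding \<alpha>'_def zb by (intro A.add_mem A.mult_mem A.diff_mem A.power_mem frob_in_image \<alpha> c z)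
  moreover have "z - \<alpha>' = e ^ Suc (Suc j) * (- c * (u * v))"
    unfolding \<alpha>'_def newton_step_error[OF cb] S_def[symmetric] v(2) err
    by (simp only: power_Suc mult_ac)
  moreover have "- c * (u * v) \<in> Zinv_poly b"
    using u v(1) A.uminus_mem[OF c] by (intro ZP.mult_mem) (auto simp: frob_image_def)
  ultimately show ?case unfolding z_def e_def by (blast intro: ZP.cong_modI)
qed

lemma xn_in_image: "monom 1 n \<in> frob_image b n k"
proof -
  define E :: "rat poly" where "E = monom 1 n - 1"
  obtain \<alpha> where \<alpha>: "\<alpha> \<in> frob_image b n k"
    and cong: "cong_mod (Zinv_poly b) (E ^ Suc k) (monom 1 n) \<alpha>"
    using newton_approximation unfolding E_def by blast
  obtain \<psi> where \<psi>: "\<psi> \<in> Zinv_poly b" "E = cyclotomic n * \<psi>"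
    unfolding E_def by (rule xn_minus_1_cyclotomic_multiple)
  have "E ^ k = cyclotomic n ^ k * \<psi> ^ k" by (simp only: \<psi>(2) power_mult_distrib)
  then have "E ^ Suc k = cyclotomic n ^ k * (\<psi> ^ k * E)" by (simp only: power_Suc2 mult.assoc)
  then have "cong_mod (Zinv_poly b) (cyclotomic n ^ k * (\<psi> ^ k * E)) (monom 1 n) \<alpha>"
    using cong by (simp only:)
  moreover have "\<psi> ^ k * E \<in> Zinv_poly b"
    unfolding E_def by (intro ZP.mult_mem ZP.power_mem ZP.diff_mem \<psi>(1) xn_in_Zinv_poly ZP.one_mem)
  ultimately have "cong_cyc b n k \<alpha> (monom 1 n)"
    unfolding cong_cyc_eq by (blast intro: ZP.cong_mod_sym ZP.cong_mod_weaken)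
  then show ?thesis using image_cong[OF \<alpha> xn_in_Zinv_poly] by blast
qed

text \<open>From \<open>bc = 1 + nt\<close>: \<open>F\<^sub>b(q\<^sup>c) = q z\<^sup>t\<close>, and \<open>z = q\<^sup>n\<close> is a unit modulo \<open>\<Phi>\<^sub>n\<^sup>k\<close> with inverse
  \<open>w = \<Sum>\<^bsub>i<k\<^esub> (1 - z)\<^sup>i\<close> in the image, so \<open>q \<equiv> F\<^sub>b(q\<^sup>c) w\<^sup>t\<close> lies in the image.\<close>

lemma q_in_image: "monom 1 1 \<in> frob_image b n k"
proof -
  obtain c t where ct: "b * c = 1 + n * t" using bezout_coprime[OF b coprime] by blast
  define z :: "rat poly" where "z = monom 1 n"
  define w where "w = (\<Sum>i<k. (1 - z) ^ i)"
  obtain \<psi> where \<psi>: "\<psi> \<in> Zinv_poly b" "z - 1 = cyclotomic n * \<psi>"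
    unfolding z_def by (rule xn_minus_1_cyclotomic_multiple)
  have z: "z \<in> frob_image b n k" unfolding z_def by (rule xn_in_image)
  have w: "w \<in> frob_image b n k"
    unfolding w_def by (intro A.sum_mem A.power_mem A.diff_mem A.one_mem z)
  have "1 - z = cyclotomic n * - \<psi>" using \<psi>(2) by (simp add: algebra_simps)
  then have "(1 - z) ^ k = cyclotomic n ^ k * (- \<psi>) ^ k" by (simp only: power_mult_distrib)
  moreover have "z * w = 1 - (1 - z) ^ k"
    using one_diff_power_eq[of "1 - z" k] by (simp add: w_def)
  ultimately have "z * w - 1 = cyclotomic n ^ k * - ((- \<psi>) ^ k)" by simp
  then have "cong_mod (Zinv_poly b) (cyclotomic n ^ k) (z * w) 1"
    by (rule ZP.cong_modI[rotated]) (intro ZP.uminus_mem ZP.power_mem \<psi>(1))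
  then have "cong_mod (Zinv_poly b) (cyclotomic n ^ k) (monom 1 1 * (z * w) ^ t) (monom 1 1 * 1 ^ t)"
    using A.mult_mem[OF z w] xn_in_Zinv_poly unfolding frob_image_def
    by (intro ZP.cong_mod_mult ZP.cong_mod_power ZP.cong_mod_refl ZP.power_mem ZP.one_mem) auto
  moreover have "frob b (monom 1 c) = monom 1 1 * z ^ t"
    by (simp add: frob_monom ct z_def monom_power mult_monom)
  then have "monom 1 1 * (z * w) ^ t = frob b (monom 1 c) * w ^ t"
    by (simp add: power_mult_distrib mult.assoc)
  moreover have "frob b (monom 1 c) * w ^ t \<in> frob_image b n k"
    by (intro A.mult_mem A.power_mem frob_in_image xn_in_Zinv_poly w)
  ultimately show ?thesis using image_cong[OF _ xn_in_Zinv_poly] unfolding cong_cyc_eq by fastforce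
qed

lemma frob_image_eq: "frob_image b n k = Zinv_poly b"
proof
  show "Zinv_poly b \<subseteq> frob_image b n k"
  proof
    fix p assume "p \<in> Zinv_poly b"
    then show "p \<in> frob_image b n k"
    proof (induction p)
      case (pCons a p)
      then have "a \<in> Zinv b" "p \<in> Zinv_poly b" by (simp_all add: Zinv_poly_eq pCons_in_polys_over)
      moreover have "pCons a p = [:a:] + monom 1 1 * p" by (simp add: monom_Suc monom_0)
      ultimately show ?case
        using pCons.IH by (metis A.add_mem A.mult_mem const_in_image q_in_image)
    qed simp
  qed
qed (auto simp: frob_image_def)

end

theorem proposition12:
  fixes b n k :: nat
  assumes "b > 0" and "n > 0" and "coprime n b"
  shows "(\<forall>p\<in>Zinv_poly b. frob b p \<in> Zinv_poly b)
    \<and> (\<forall>p\<in>Zinv_poly b. \<forall>p'\<in>Zinv_poly b.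
          cong_cyc b n k p p' \<longrightarrow> cong_cyc b n k (frob b p) (frob b p'))
    \<and> (\<forall>p\<in>Zinv_poly b. \<forall>p'\<in>Zinv_poly b.
          frob b (p + p') = frob b p + frob b p' \<and> frob b (p * p') = frob b p * frob b p')
    \<and> frob b 1 = 1
    \<and> (\<forall>c\<in>Zinv b. \<forall>p\<in>Zinv_poly b. frob b (smult c p) = smult c (frob b p))
    \<and> (\<forall>p\<in>Zinv_poly b. \<forall>p'\<in>Zinv_poly b.
          cong_cyc b n k (frob b p) (frob b p') \<longrightarrow> cong_cyc b n k p p')
    \<and> (\<forall>p\<in>Zinv_poly b. \<exists>r\<in>Zinv_poly b. cong_cyc b n k (frob b r) p)"
proof -
  have closed: "\<forall>p\<in>Zinv_poly b. frob b p \<in> Zinv_poly b"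
    using frob_in_Zinv_poly[OF assms(1)] by blast
  have congruence: "\<forall>p\<in>Zinv_poly b. \<forall>p'\<in>Zinv_poly b.
      cong_cyc b n k (frob b p) (frob b p') \<longleftrightarrow> cong_cyc b n k p p'"
    using cong_cyc_frob_iff[OF assms] by blast
  have algebra_hom: "frob b (p + p') = frob b p + frob b p'" "frob b (p * p') = frob b p * frob b p'"
    "frob b 1 = 1" "frob b (smult c p) = smult c (frob b p)" for p p' c
    by (simp_all add: frob_def pcompose_add pcompose_mult pcompose_1 pcompose_smult)
  have surjective: "\<forall>p\<in>Zinv_poly b. \<exists>r\<in>Zinv_poly b. cong_cyc b n k (frob b r) p"
    using frob_image_eq[OF assms, of k] by (auto simp: frob_image_def)
  show ?thesis using closed congruence algebra_hom surjective by blast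
qed

end
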